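(* Let $\Gamma$ be a Deza graph with parameters $(n,k,k-1,a)$, $k>1$, $\beta=1$. Let $x$ be an $A$-vertex and $y$ an $NA$-vertex of $\Gamma$. Then either all possible edges between $\{x,x_b\}$ and $\{y,y_b\}$ are present, or there are no such edges.
   Context: A Deza graph with parameters $(n,k,b,a)$, $a\le b$, is a $k$-regular graph on $n$ vertices in which any two distinct vertices have $a$ or $b$ common neighbours; $\beta$ is the number of vertices $u\ne v$ with exactly $b$ common neighbours with a given vertex $v$ (independent of $v$). Since $\beta=1$, for each vertex $x$ let $x_b$ denote the unique vertex having $b=k-1$ common neighbours with $x$. A vertex $x$ is an $A$-vertex if $x$ is adjacent to $x_b$, and an $NA$-vertex otherwise. *)

theory Defs
  imports Main
begin

definition simple_graph :: "'a set \<Rightarrow> ('a \<Rightarrow> 'a \<Rightarrow> bool) \<Rightarrow> bool" where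
  "simple_graph V E \<longleftrightarrow> finite V \<and> (\<forall>u v. E u v \<longrightarrow> u \<in> V \<and> v \<in> V)
     \<and> (\<forall>u v. E u v \<longrightarrow> E v u) \<and> (\<forall>u. \<not> E u u)"

definition common_nbrs :: "'a set \<Rightarrow> ('a \<Rightarrow> 'a \<Rightarrow> bool) \<Rightarrow> 'a \<Rightarrow> 'a \<Rightarrow> nat" where
  "common_nbrs V E u v = card {w \<in> V. E u w \<and> E v w}"

definition deza_graph :: "'a set \<Rightarrow> ('a \<Rightarrow> 'a \<Rightarrow> bool) \<Rightarrow> nat \<Rightarrow> nat \<Rightarrow> nat \<Rightarrow> nat \<Rightarrow> bool" where
  "deza_graph V E n k b a \<longleftrightarrow> simple_graph V E \<and> card V = n \<and> a \<le> b
     \<and> (\<forall>v\<in>V. card {u \<in> V. E v u} = k)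
     \<and> (\<forall>u\<in>V. \<forall>v\<in>V. u \<noteq> v \<longrightarrow> common_nbrs V E u v = a \<or> common_nbrs V E u v = b)"

definition beta_at :: "'a set \<Rightarrow> ('a \<Rightarrow> 'a \<Rightarrow> bool) \<Rightarrow> nat \<Rightarrow> 'a \<Rightarrow> nat" where
  "beta_at V E b v = card {u \<in> V. u \<noteq> v \<and> common_nbrs V E u v = b}"

text \<open>When beta = 1: the unique vertex x_b having b common neighbours with x.\<close>
definition b_partner :: "'a set \<Rightarrow> ('a \<Rightarrow> 'a \<Rightarrow> bool) \<Rightarrow> nat \<Rightarrow> 'a \<Rightarrow> 'a" where
  "b_partner V E b x = (THE u. u \<in> V \<and> u \<noteq> x \<and> common_nbrs V E u x = b)"

definition A_vertex :: "'a set \<Rightarrow> ('a \<Rightarrow> 'a \<Rightarrow> bool) \<Rightarrow> nat \<Rightarrow> 'a \<Rightarrow> bool" where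
  "A_vertex V E b x \<longleftrightarrow> x \<in> V \<and> E x (b_partner V E b x)"

definition NA_vertex :: "'a set \<Rightarrow> ('a \<Rightarrow> 'a \<Rightarrow> bool) \<Rightarrow> nat \<Rightarrow> 'a \<Rightarrow> bool" where
  "NA_vertex V E b x \<longleftrightarrow> x \<in> V \<and> \<not> E x (b_partner V E b x)"

end

theory Submission
  imports Defs
begin

text \<open>If two vertices u, v of degree k have k - 1 common neighbours, then u has at most one
  neighbour outside the neighbourhood of v.  For an A-vertex x that neighbour is x_b itself,
  so x and x_b are adjacent twins: they have the same neighbours apart from each other.
  Consequently x and x_b see y and y_b alike; if x were adjacent to exactly one of y,
  y_b, so would be x_b, giving y or y_b two neighbours outside the neighbourhood
  of the other.\<close>

lemma common_nbrs_commute: "common_nbrs V E u v = common_nbrs V E v u"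
  unfolding common_nbrs_def by (metis (no_types, lifting) Collect_cong)

lemma private_nbr_unique:
  assumes "simple_graph V E" "card {w \<in> V. E u w} = k" "common_nbrs V E u v = k - 1"
    and "E u z" "E u z'" "\<not> E v z" "\<not> E v z'"
  shows "z = z'"
proof -
  let ?N = "{w \<in> V. E u w}" and ?C = "{w \<in> V. E u w \<and> E v w}"
  have "finite ?N" using assms(1) unfolding simple_graph_def by auto
  moreover have "?C \<subseteq> ?N" by auto
  ultimately have "card (?N - ?C) = k - (k - 1)"
    using assms(2,3) by (simp add: card_Diff_subset finite_subset common_nbrs_def)
  then have "card (?N - ?C) \<le> 1" by simp
  moreover have "z \<in> ?N - ?C" "z' \<in> ?N - ?C"
    using assms(1,4-7) unfolding simple_graph_def by auto
  ultimately show ?thesis using \<open>finite ?N\<close> by (auto simp: card_le_Suc0_iff_eq)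
qed

lemma A_vertex_NA_vertex_neq: "A_vertex V E b x \<Longrightarrow> NA_vertex V E b y \<Longrightarrow> x \<noteq> y"
  unfolding A_vertex_def NA_vertex_def by auto

lemma adjacent_twins:
  assumes graph: "simple_graph V E"
    and deg: "card {w \<in> V. E u w} = k" "card {w \<in> V. E v w} = k"
    and common: "common_nbrs V E u v = k - 1" and "E u v"
    and "w \<noteq> u" "w \<noteq> v"
  shows "E u w \<longleftrightarrow> E v w"
proof -
  have irrefl: "\<not> E t t" for t
    using graph unfolding simple_graph_def by auto
  have sym: "E v u"
    using graph \<open>E u v\<close> unfolding simple_graph_def by auto
  have common': "common_nbrs V E v u = k - 1"
    using common common_nbrs_commute by metis
  show ?thesis
  proof
    assume "E u w"
    show "E v w"
      using private_nbr_unique[OF graph deg(1) common \<open>E u w\<close> \<open>E u v\<close> _ irrefl] \<open>w \<noteq> v\<close> by blast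
  next
    assume "E v w"
    show "E u w"
      using private_nbr_unique[OF graph deg(2) common' \<open>E v w\<close> sym _ irrefl] \<open>w \<noteq> u\<close> by blast
  qed
qed

locale deza_beta_one =
  fixes V :: "'a set" and E :: "'a \<Rightarrow> 'a \<Rightarrow> bool" and n k a :: nat
  assumes deza: "deza_graph V E n k (k - 1) a"
    and beta_one: "\<forall>v\<in>V. beta_at V E (k - 1) v = 1"
begin

abbreviation partner :: "'a \<Rightarrow> 'a" where
  "partner \<equiv> b_partner V E (k - 1)"

lemma graph: "simple_graph V E"
  and degree: "v \<in> V \<Longrightarrow> card {w \<in> V. E v w} = k"
  using deza unfolding deza_graph_def by auto

lemma partner_characterization:
  assumes "v \<in> V"
  shows "{u \<in> V. u \<noteq> v \<and> common_nbrs V E u v = k - 1} = {partner v}"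
proof -
  have "card {u \<in> V. u \<noteq> v \<and> common_nbrs V E u v = k - 1} = 1"
    using beta_one assms unfolding beta_at_def by auto
  then obtain w where w: "{u \<in> V. u \<noteq> v \<and> common_nbrs V E u v = k - 1} = {w}"
    by (meson card_1_singletonE)
  then have "partner v = w"
    unfolding b_partner_def by (rule_tac the_equality) blast+
  with w show ?thesis by simp
qed

lemma partner_in_V: "v \<in> V \<Longrightarrow> partner v \<in> V"
  and partner_neq: "v \<in> V \<Longrightarrow> partner v \<noteq> v"
  and common_nbrs_partner: "v \<in> V \<Longrightarrow> common_nbrs V E (partner v) v = k - 1"
  and partner_unique:
    "\<lbrakk>v \<in> V; u \<in> V; u \<noteq> v; common_nbrs V E u v = k - 1\<rbrakk> \<Longrightarrow> u = partner v"
  using partner_characterization by blast+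

lemma partner_partner:
  assumes "v \<in> V" shows "partner (partner v) = v"
proof -
  have "common_nbrs V E v (partner v) = k - 1"
    using common_nbrs_partner[OF assms] common_nbrs_commute by metis
  then show ?thesis
    using partner_unique[OF partner_in_V[OF assms] assms] partner_neq[OF assms] by auto
qed

lemma A_vertex_partner:
  assumes "A_vertex V E (k - 1) x" shows "A_vertex V E (k - 1) (partner x)"
proof -
  have "x \<in> V" "E x (partner x)" using assms unfolding A_vertex_def by auto
  then show ?thesis
    using partner_in_V partner_partner graph unfolding A_vertex_def simple_graph_def by auto
qed

lemma NA_vertex_partner:
  assumes "NA_vertex V E (k - 1) y" shows "NA_vertex V E (k - 1) (partner y)"
proof -
  have "y \<in> V" "\<not> E y (partner y)" using assms unfolding NA_vertex_def by auto
  then show ?thesis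
    using partner_in_V partner_partner graph unfolding NA_vertex_def simple_graph_def by auto
qed

lemma A_vertex_twins:
  assumes "A_vertex V E (k - 1) x" "w \<noteq> x" "w \<noteq> partner x"
  shows "E x w \<longleftrightarrow> E (partner x) w"
proof -
  have x: "x \<in> V" "E x (partner x)" using assms(1) unfolding A_vertex_def by auto
  have "common_nbrs V E x (partner x) = k - 1"
    using common_nbrs_partner[OF x(1)] common_nbrs_commute by metis
  from adjacent_twins[OF graph degree[OF x(1)] degree[OF partner_in_V[OF x(1)]] this x(2) assms(2,3)]
  show ?thesis .
qed

lemma sees_partners_alike:
  assumes "y \<in> V" "z \<noteq> z'"
    and alike_y: "E z y \<longleftrightarrow> E z' y" and alike_partner: "E z (partner y) \<longleftrightarrow> E z' (partner y)"
  shows "E z y \<longleftrightarrow> E z (partner y)"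
proof -
  have sym: "E s t \<longleftrightarrow> E t s" for s t using graph unfolding simple_graph_def by auto
  have "common_nbrs V E y (partner y) = k - 1"
    using common_nbrs_partner[OF assms(1)] common_nbrs_commute by metis
  note y_private = private_nbr_unique[OF graph degree[OF assms(1)] this]
  note partner_private = private_nbr_unique[OF graph
      degree[OF partner_in_V[OF assms(1)]] common_nbrs_partner[OF assms(1)]]
  show ?thesis
  proof
    assume "E z y"
    show "E z (partner y)"
      using y_private[of z z'] \<open>E z y\<close> alike_y alike_partner sym \<open>z \<noteq> z'\<close> by blast
  next
    assume "E z (partner y)"
    show "E z y"
      using partner_private[of z z'] \<open>E z (partner y)\<close> alike_y alike_partner sym \<open>z \<noteq> z'\<close> by blast
  qed
qed

end

theorem lemma4:
  fixes V :: "'a set" and E :: "'a \<Rightarrow> 'a \<Rightarrow> bool" and n k a :: nat and x y :: 'a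
  assumes "deza_graph V E n k (k - 1) a"
    and "k > 1"
    and "\<forall>v\<in>V. beta_at V E (k - 1) v = 1"
    and "A_vertex V E (k - 1) x"
    and "NA_vertex V E (k - 1) y"
  shows "(\<forall>u\<in>{x, b_partner V E (k - 1) x}. \<forall>w\<in>{y, b_partner V E (k - 1) y}. E u w)
       \<or> (\<forall>u\<in>{x, b_partner V E (k - 1) x}. \<forall>w\<in>{y, b_partner V E (k - 1) y}. \<not> E u w)"
proof -
  interpret deza_beta_one V E n k a
    using assms(1,3) by unfold_locales
  have A: "A_vertex V E (k - 1) x" "A_vertex V E (k - 1) (partner x)"
    using assms(4) A_vertex_partner by auto
  have NA: "NA_vertex V E (k - 1) y" "NA_vertex V E (k - 1) (partner y)"
    using assms(5) NA_vertex_partner by auto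
  have "y \<in> V" using NA(1) unfolding NA_vertex_def by auto
  have "x \<in> V" using A(1) unfolding A_vertex_def by auto
  then have "x \<noteq> partner x" using partner_neq by metis
  have twin_y: "E x y \<longleftrightarrow> E (partner x) y"
    using A_vertex_twins[OF A(1)] A_vertex_NA_vertex_neq[OF A(1) NA(1)]
      A_vertex_NA_vertex_neq[OF A(2) NA(1)] by metis
  have twin_partner_y: "E x (partner y) \<longleftrightarrow> E (partner x) (partner y)"
    using A_vertex_twins[OF A(1)] A_vertex_NA_vertex_neq[OF A(1) NA(2)]
      A_vertex_NA_vertex_neq[OF A(2) NA(2)] by metis
  have "E x y \<longleftrightarrow> E x (partner y)"
    using sees_partners_alike[OF \<open>y \<in> V\<close> \<open>x \<noteq> partner x\<close> twin_y twin_partner_y] .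
  with twin_y twin_partner_y show ?thesis by blast
qed

end
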